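(* Let $G=(X,\Sigma,\longrightarrow,X_0)$ be a plant and $R=(Z,\Sigma,\longrightarrow,Z_0)$ a specification. If $S=(Y,\Sigma,\longrightarrow,Y_0)$ is a $\Sigma_{uc}$-admissible supervisor and $\Phi$ is a cc-simulation from $S\|G$ to $R$, then $E(\Phi)=\{\theta_y:y\in Y\}$, where $\theta_y=\{(x,z):((y,x),z)\in\Phi\text{ and }(y,x)\text{ is reachable in }S\|G\}$, is a $\Sigma_{ucr}$-controllability set from $G$ to $R$.
   Context: An automaton is a 4-tuple $A=(Q,\Sigma,\longrightarrow,Q_0)$ with state set $Q$, finite event set $\Sigma$, ${\longrightarrow}\subseteq Q\times\Sigma\times Q$ and $\emptyset\neq Q_0\subseteq Q$. Write $q\xrightarrow{\sigma}q'$ for $(q,\sigma,q')\in{\longrightarrow}$, $q\xrightarrow{\sigma}$ if some such $q'$ exists; extend to strings. A state is reachable if it is reached from an initial state by some string. Events are partitioned into uncontrollable $\Sigma_{uc}$ and controllable $\Sigma_c$; $\Sigma_r\subseteq\Sigma$ is a fixed set of required events. $S\|G=(Y\times X,\Sigma,\longrightarrow,Y_0\times X_0)$ with $(y,x)\xrightarrow{\sigma}(y',x')$ iff $y\xrightarrow{\sigma}y'$ and $x\xrightarrow{\sigma}x'$. $S$ is $\Sigma_{uc}$-admissible w.r.t. $G$ if for every reachable $(y,x)$ of $S\|G$ and $\sigma\in\Sigma_{uc}$, $x\xrightarrow{\sigma}$ implies $(y,x)\xrightarrow{\sigma}$. For automata $A_1,A_2$ with state sets $Q_1,Q_2$ and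 initial sets $Q_{01},Q_{02}$, $\Phi\subseteq Q_1\times Q_2$ is a cc-simulation if (initial state) every $q_0\in Q_{01}$ has $p_0\in Q_{02}$ with $(q_0,p_0)\in\Phi$; (forward) for $(q,p)\in\Phi$, $\sigma\in\Sigma$, $q\xrightarrow{\sigma}q'$ there is $p'$ with $p\xrightarrow{\sigma}p'$, $(q',p')\in\Phi$; ($\Sigma_r$-backward) for $(q,p)\in\Phi$, $\sigma\in\Sigma_r$, $p\xrightarrow{\sigma}p'$ there is $q'$ with $q\xrightarrow{\sigma}q'$, $(q',p')\in\Phi$. For $W,W'\subseteq X\times Z$: $\mathit{match}_{G,R}(W,\sigma,W')$ iff for all $(x,z)\in W$ and $x\xrightarrow{\sigma}x'$ there is $z'$ with $z\xrightarrow{\sigma}z'$ and $(x',z')\in W'$. $E\subseteq\wp(X\times Z)$ is a $\Sigma_{ucr}$-controllability set from $G$ to $R$ if: (istate) some $W_0\in E$ satisfies $\forall x_0\in X_0\,\exists z_0\in Z_0\,((x_0,z_0)\in W_0)$; (a) for every $W\in E$, $\sigma\in\Sigma_{uc}$ there is $W'\in E$ with $\mathit{match}_{G,R}(W,\sigma,W')$; (b) for every $W\in E$, $(x,z)\in W$, $\sigma\in\Sigma_r$, $z\xrightarrow{\sigma}z'$, there exist $x'$, $W'\in E$ with $x\xrightarrow{\sigma}x'$, $(x',z')\in W'$, $\mathit{match}_{G,R}(W,\sigma,W')$. *)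

theory Defs
  imports Main
begin

text \<open>An automaton (Q, Sigma, -->, Q0): the state set Q is the type 'q, the finite event
set Sigma is the (finite) type 'e, the transition relation and the initial states are fields.\<close>

record ('q, 'e) automaton =
  trans :: "('q \<times> 'e \<times> 'q) set"
  init  :: "'q set"

definition is_automaton :: "('q, 'e::finite) automaton \<Rightarrow> bool" where
  "is_automaton A \<longleftrightarrow> init A \<noteq> {}"

definition step :: "('q, 'e) automaton \<Rightarrow> 'q \<Rightarrow> 'e \<Rightarrow> 'q \<Rightarrow> bool" where
  "step A q e q' \<longleftrightarrow> (q, e, q') \<in> trans A"

definition enabled :: "('q, 'e) automaton \<Rightarrow> 'q \<Rightarrow> 'e \<Rightarrow> bool" where
  "enabled A q e \<longleftrightarrow> (\<exists>q'. step A q e q')"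

fun steps :: "('q, 'e) automaton \<Rightarrow> 'q \<Rightarrow> 'e list \<Rightarrow> 'q \<Rightarrow> bool" where
  "steps A q [] q' \<longleftrightarrow> q' = q"
| "steps A q (e # es) q' \<longleftrightarrow> (\<exists>q''. step A q e q'' \<and> steps A q'' es q')"

definition reachable :: "('q, 'e) automaton \<Rightarrow> 'q \<Rightarrow> bool" where
  "reachable A q \<longleftrightarrow> (\<exists>q0 \<in> init A. \<exists>s. steps A q0 s q)"

definition sync :: "('y, 'e) automaton \<Rightarrow> ('x, 'e) automaton \<Rightarrow> ('y \<times> 'x, 'e) automaton" where
  "sync S G = \<lparr> trans = {((y, x), e, (y', x')) | y x e y' x'. step S y e y' \<and> step G x e x'},
                init = init S \<times> init G \<rparr>"

definition admissible :: "'e set \<Rightarrow> ('y, 'e) automaton \<Rightarrow> ('x, 'e) automaton \<Rightarrow> bool" where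
  "admissible Euc S G \<longleftrightarrow>
     (\<forall>y x. reachable (sync S G) (y, x) \<longrightarrow>
        (\<forall>e \<in> Euc. enabled G x e \<longrightarrow> enabled (sync S G) (y, x) e))"

definition cc_simulation :: "'e set \<Rightarrow> ('q, 'e) automaton \<Rightarrow> ('p, 'e) automaton \<Rightarrow> ('q \<times> 'p) set \<Rightarrow> bool" where
  "cc_simulation Er A1 A2 Phi \<longleftrightarrow>
     (\<forall>q0 \<in> init A1. \<exists>p0 \<in> init A2. (q0, p0) \<in> Phi) \<and>
     (\<forall>q p e q'. (q, p) \<in> Phi \<longrightarrow> step A1 q e q' \<longrightarrow> (\<exists>p'. step A2 p e p' \<and> (q', p') \<in> Phi)) \<and>
     (\<forall>q p e p'. (q, p) \<in> Phi \<longrightarrow> e \<in> Er \<longrightarrow> step A2 p e p' \<longrightarrow> (\<exists>q'. step A1 q e q' \<and> (q', p') \<in> Phi))"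

definition match :: "('x, 'e) automaton \<Rightarrow> ('z, 'e) automaton \<Rightarrow> ('x \<times> 'z) set \<Rightarrow> 'e \<Rightarrow> ('x \<times> 'z) set \<Rightarrow> bool" where
  "match G R W e W' \<longleftrightarrow>
     (\<forall>x z x'. (x, z) \<in> W \<longrightarrow> step G x e x' \<longrightarrow> (\<exists>z'. step R z e z' \<and> (x', z') \<in> W'))"

definition controllability_set ::
  "'e set \<Rightarrow> 'e set \<Rightarrow> ('x, 'e) automaton \<Rightarrow> ('z, 'e) automaton \<Rightarrow> ('x \<times> 'z) set set \<Rightarrow> bool" where
  "controllability_set Euc Er G R E \<longleftrightarrow>
     (\<exists>W0 \<in> E. \<forall>x0 \<in> init G. \<exists>z0 \<in> init R. (x0, z0) \<in> W0) \<and>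
     (\<forall>W \<in> E. \<forall>e \<in> Euc. \<exists>W' \<in> E. match G R W e W') \<and>
     (\<forall>W \<in> E. \<forall>x z e z'. (x, z) \<in> W \<longrightarrow> e \<in> Er \<longrightarrow> step R z e z' \<longrightarrow>
        (\<exists>x' W'. step G x e x' \<and> W' \<in> E \<and> (x', z') \<in> W' \<and> match G R W e W'))"

definition theta :: "('y, 'e) automaton \<Rightarrow> ('x, 'e) automaton \<Rightarrow> (('y \<times> 'x) \<times> 'z) set \<Rightarrow> 'y \<Rightarrow> ('x \<times> 'z) set" where
  "theta S G Phi y = {(x, z). ((y, x), z) \<in> Phi \<and> reachable (sync S G) (y, x)}"

definition E_of :: "('y, 'e) automaton \<Rightarrow> ('x, 'e) automaton \<Rightarrow> (('y \<times> 'x) \<times> 'z) set \<Rightarrow> ('x \<times> 'z) set set" where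
  "E_of S G Phi = {theta S G Phi y | y. True}"

end

(* A transition y -e-> y' of S carries theta y into theta y' by the forward clause of the
   cc-simulation, because theta only records reachable states of S || G.  For an
   uncontrollable e that S cannot execute from y, admissibility forbids G from executing e
   at any reachable (y, x), so the match condition holds vacuously.  Required events of R
   are answered through the backward clause, and an initial state of S gives the initial set. *)
theory Submission
  imports Defs
begin

lemma steps_snoc: "steps A q s q1 \<Longrightarrow> step A q1 e q2 \<Longrightarrow> steps A q (s @ [e]) q2"
  by (induction s arbitrary: q) auto

lemma reachable_init: "q \<in> init A \<Longrightarrow> reachable A q"
  unfolding reachable_def by (metis steps.simps(1))

lemma reachable_step: "reachable A q \<Longrightarrow> step A q e q' \<Longrightarrow> reachable A q'"
  unfolding reachable_def by (meson steps_snoc)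

lemma step_sync_iff: "step (sync S G) (y, x) e (y', x') \<longleftrightarrow> step S y e y' \<and> step G x e x'"
  unfolding step_def sync_def by auto

lemma enabled_syncD: "enabled (sync S G) (y, x) e \<Longrightarrow> enabled S y e"
  unfolding enabled_def by (auto simp: step_sync_iff)

lemma theta_iff: "(x, z) \<in> theta S G Phi y \<longleftrightarrow> ((y, x), z) \<in> Phi \<and> reachable (sync S G) (y, x)"
  unfolding theta_def by simp

lemma theta_in_E_of: "theta S G Phi y \<in> E_of S G Phi"
  unfolding E_of_def by blast

lemma E_of_obtain:
  assumes "W \<in> E_of S G Phi"
  obtains y where "W = theta S G Phi y"
  using assms unfolding E_of_def by blast

lemma theta_init:
  assumes "cc_simulation Er (sync S G) R Phi" and "y0 \<in> init S" and "x0 \<in> init G"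
  shows "\<exists>z0 \<in> init R. (x0, z0) \<in> theta S G Phi y0"
proof -
  have init_yx: "(y0, x0) \<in> init (sync S G)"
    using assms(2,3) unfolding sync_def by simp
  then obtain z0 where "z0 \<in> init R" "((y0, x0), z0) \<in> Phi"
    using assms(1) unfolding cc_simulation_def by blast
  with reachable_init[OF init_yx] show ?thesis
    by (auto simp: theta_iff)
qed

lemma match_theta_step:
  assumes "cc_simulation Er (sync S G) R Phi" and "step S y e y'"
  shows "match G R (theta S G Phi y) e (theta S G Phi y')"
  unfolding match_def
proof (intro allI impI)
  fix x z x'
  assume xz: "(x, z) \<in> theta S G Phi y" and "step G x e x'"
  with assms(2) have sync_step: "step (sync S G) (y, x) e (y', x')"
    by (simp add: step_sync_iff)
  from xz have "((y, x), z) \<in> Phi" and reach: "reachable (sync S G) (y, x)"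
    by (simp_all add: theta_iff)
  with sync_step assms(1) obtain z' where "step R z e z'" "((y', x'), z') \<in> Phi"
    unfolding cc_simulation_def by blast
  with reachable_step[OF reach sync_step]
  show "\<exists>z'. step R z e z' \<and> (x', z') \<in> theta S G Phi y'"
    by (auto simp: theta_iff)
qed

lemma match_theta_blocked:
  assumes "admissible Euc S G" and "e \<in> Euc" and "\<not> enabled S y e"
  shows "match G R (theta S G Phi y) e W"
  unfolding match_def
proof (intro allI impI)
  fix x z x'
  assume "(x, z) \<in> theta S G Phi y" and "step G x e x'"
  then have "reachable (sync S G) (y, x)" and "enabled G x e"
    by (auto simp: theta_iff enabled_def)
  with assms(1,2) have "enabled S y e"
    unfolding admissible_def by (blast intro: enabled_syncD)
  with assms(3) show "\<exists>z'. step R z e z' \<and> (x', z') \<in> W"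
    by blast
qed

lemma theta_required_step:
  assumes "cc_simulation Er (sync S G) R Phi"
    and "(x, z) \<in> theta S G Phi y" and "e \<in> Er" and "step R z e z'"
  obtains y' x' where "step S y e y'" and "step G x e x'" and "(x', z') \<in> theta S G Phi y'"
proof -
  from assms(2) have "((y, x), z) \<in> Phi" and reach: "reachable (sync S G) (y, x)"
    by (simp_all add: theta_iff)
  with assms(1,3,4) obtain q where "step (sync S G) (y, x) e q" and "(q, z') \<in> Phi"
    unfolding cc_simulation_def by blast
  then obtain y' x' where
    sync_step: "step (sync S G) (y, x) e (y', x')" and "((y', x'), z') \<in> Phi"
    by (cases q) auto
  with reachable_step[OF reach sync_step] have "(x', z') \<in> theta S G Phi y'"
    by (simp add: theta_iff)
  with sync_step show thesis
    by (intro that) (simp_all add: step_sync_iff)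
qed

lemma uncontrollable_match_theta:
  assumes "admissible Euc S G" and "cc_simulation Er (sync S G) R Phi" and "e \<in> Euc"
  shows "\<exists>W' \<in> E_of S G Phi. match G R (theta S G Phi y) e W'"
proof (cases "enabled S y e")
  case True
  with assms(2) show ?thesis
    unfolding enabled_def by (blast intro: theta_in_E_of match_theta_step)
next
  case False
  with assms(1,3) show ?thesis
    by (blast intro: theta_in_E_of match_theta_blocked)
qed

lemma required_match_theta:
  assumes "cc_simulation Er (sync S G) R Phi"
    and "(x, z) \<in> theta S G Phi y" and "e \<in> Er" and "step R z e z'"
  shows "\<exists>x' W'. step G x e x' \<and> W' \<in> E_of S G Phi \<and> (x', z') \<in> W'
    \<and> match G R (theta S G Phi y) e W'"
proof -
  obtain y' x' where "step S y e y'" "step G x e x'" "(x', z') \<in> theta S G Phi y'"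
    by (rule theta_required_step[OF assms])
  with assms(1) show ?thesis
    by (blast intro: theta_in_E_of match_theta_step)
qed

theorem lemma4:
  fixes G :: "('x, 'e::finite) automaton" and R :: "('z, 'e) automaton"
    and S :: "('y, 'e) automaton" and Phi :: "(('y \<times> 'x) \<times> 'z) set"
    and Euc Er :: "'e set"
  assumes "is_automaton G" and "is_automaton R" and "is_automaton S"
    and "admissible Euc S G"
    and "cc_simulation Er (sync S G) R Phi"
  shows "controllability_set Euc Er G R (E_of S G Phi)"
proof -
  obtain y0 where "y0 \<in> init S"
    using assms(3) unfolding is_automaton_def by blast
  with assms(5) have istate: "\<exists>W0 \<in> E_of S G Phi. \<forall>x0 \<in> init G. \<exists>z0 \<in> init R. (x0, z0) \<in> W0"
    by (blast intro: theta_in_E_of theta_init)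
  have uncontrollable: "\<forall>W \<in> E_of S G Phi. \<forall>e \<in> Euc. \<exists>W' \<in> E_of S G Phi. match G R W e W'"
    using uncontrollable_match_theta[OF assms(4,5)] by (auto elim: E_of_obtain)
  have required: "\<forall>W \<in> E_of S G Phi. \<forall>x z e z'. (x, z) \<in> W \<longrightarrow> e \<in> Er \<longrightarrow> step R z e z' \<longrightarrow>
      (\<exists>x' W'. step G x e x' \<and> W' \<in> E_of S G Phi \<and> (x', z') \<in> W' \<and> match G R W e W')"
    using required_match_theta[OF assms(5)] by (auto elim: E_of_obtain)
  show ?thesis
    unfolding controllability_set_def using istate uncontrollable required by (intro conjI)
qed

end
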